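(* Let $k, n \in \mathbb{N}$ with $k \le 2n$. Color every edge of the complete bipartite graph $K_{2n,2n}$ either red or blue in such a way that every vertex is incident with exactly $n$ red edges and exactly $n$ blue edges. Then $K_{2n,2n}$ has a perfect matching consisting of exactly $k$ red edges and $2n-k$ blue edges, unless $k$ is odd and the graph of blue edges is isomorphic to $K_{n,n} \cup K_{n,n}$ (the disjoint union of two copies of $K_{n,n}$).
   Context: The graph of blue edges is the spanning subgraph of $K_{2n,2n}$ on all $4n$ vertices whose edge set is the set of blue edges. *)

theory Defs
  imports Main
begin

text \<open>A red/blue colouring is given by a predicate blue i j on pairs of a left and a right vertex;
  edge (i,j) is blue iff blue i j holds, and red otherwise.\<close>

definition bip_vertices :: "nat \<Rightarrow> (nat + nat) set" where
  "bip_vertices m = Inl ` {..<m} \<union> Inr ` {..<m}"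

fun blue_adj :: "(nat \<Rightarrow> nat \<Rightarrow> bool) \<Rightarrow> nat + nat \<Rightarrow> nat + nat \<Rightarrow> bool" where
  "blue_adj b (Inl i) (Inr j) = b i j"
| "blue_adj b (Inr j) (Inl i) = b i j"
| "blue_adj b _ _ = False"

text \<open>Two disjoint copies of K_{n,n}: vertex (c, s, i) = copy c, side s, index i < n.\<close>
definition two_Knn_vertices :: "nat \<Rightarrow> (bool \<times> bool \<times> nat) set" where
  "two_Knn_vertices n = UNIV \<times> UNIV \<times> {..<n}"

definition two_Knn_adj :: "bool \<times> bool \<times> nat \<Rightarrow> bool \<times> bool \<times> nat \<Rightarrow> bool" where
  "two_Knn_adj u v = (fst u = fst v \<and> fst (snd u) \<noteq> fst (snd v))"

definition graph_iso :: "'a set \<Rightarrow> ('a \<Rightarrow> 'a \<Rightarrow> bool) \<Rightarrow> 'b set \<Rightarrow> ('b \<Rightarrow> 'b \<Rightarrow> bool) \<Rightarrow> bool" where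
  "graph_iso V1 E1 V2 E2 = (\<exists>f. bij_betw f V1 V2 \<and> (\<forall>u\<in>V1. \<forall>v\<in>V1. E1 u v \<longleftrightarrow> E2 (f u) (f v)))"

end

theory Submission
  imports Defs "HOL-Combinatorics.Transposition"
begin

(* A perfect matching of K_{2n,2n} is a permutation sigma of {..<2n}, and its weight is the number
   of its blue edges. Composing sigma with a transposition or a 3-cycle changes the weight only
   locally. The core of the proof is that if the weight is below 2n and no such move raises it by
   exactly one, then the blue matrix has the form  blue i j <-> (i : R <-> j : C)  with
   card R = card C = n, i.e. the blue graph is two disjoint copies of K_{n,n}, and then some
   transposition raises the weight by two. In that exceptional case all weights are even. So,
   walking upwards from the identity in the blue or in the red colouring, every weight of the
   admissible parity in {0..2n} is attained. *)

section \<open>Weights of matchings\<close>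

definition match_weight :: "(nat \<Rightarrow> nat \<Rightarrow> bool) \<Rightarrow> nat \<Rightarrow> (nat \<Rightarrow> nat) \<Rightarrow> nat" where
  "match_weight B m \<sigma> = card {i. i < m \<and> B i (\<sigma> i)}"

lemma match_weight_eq_sum: "match_weight B m \<sigma> = (\<Sum>i<m. of_bool (B i (\<sigma> i)))"
  by (simp add: match_weight_def lessThan_def Collect_conj_eq)

lemma match_weight_le: "match_weight B m \<sigma> \<le> m"
  unfolding match_weight_def using card_mono[of "{..<m}" "{i. i < m \<and> B i (\<sigma> i)}"] by auto

lemma match_weight_compl: "match_weight (\<lambda>i j. \<not> B i j) m \<sigma> = m - match_weight B m \<sigma>"
proof -
  have "of_bool (\<not> p) + of_bool p = (1::nat)" for p
    by (cases p) simp_all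
  then have "match_weight (\<lambda>i j. \<not> B i j) m \<sigma> + match_weight B m \<sigma> = m"
    unfolding match_weight_eq_sum sum.distrib[symmetric] by (simp del: sum_of_bool_eq)
  then show ?thesis by simp
qed

lemma match_weight_update:
  assumes "D \<subseteq> {..<m}" and "\<And>i. i < m \<Longrightarrow> i \<notin> D \<Longrightarrow> \<tau> i = \<sigma> i"
  shows "match_weight B m \<tau> + (\<Sum>i\<in>D. of_bool (B i (\<sigma> i)))
       = match_weight B m \<sigma> + (\<Sum>i\<in>D. of_bool (B i (\<tau> i)))"
proof -
  have split: "match_weight B m \<rho>
      = (\<Sum>i\<in>{..<m} - D. of_bool (B i (\<rho> i))) + (\<Sum>i\<in>D. of_bool (B i (\<rho> i)))" for \<rho>
    unfolding match_weight_eq_sum using assms(1) by (rule sum.subset_diff) simp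
  have outside: "(\<Sum>i\<in>{..<m} - D. of_bool (B i (\<tau> i))) = (\<Sum>i\<in>{..<m} - D. of_bool (B i (\<sigma> i)))"
    using assms(2) by (intro sum.cong) auto
  show ?thesis
    unfolding split[of \<tau>] split[of \<sigma>] outside by (simp only: ac_simps)
qed

lemma match_weight_transpose:
  assumes "a < m" "b < m" "a \<noteq> b"
  shows "match_weight B m (\<sigma> \<circ> transpose a b) + of_bool (B a (\<sigma> a)) + of_bool (B b (\<sigma> b))
       = match_weight B m \<sigma> + of_bool (B a (\<sigma> b)) + of_bool (B b (\<sigma> a))"
proof -
  have "match_weight B m (\<sigma> \<circ> transpose a b) + (\<Sum>i\<in>{a, b}. of_bool (B i (\<sigma> i)))
      = match_weight B m \<sigma> + (\<Sum>i\<in>{a, b}. of_bool (B i ((\<sigma> \<circ> transpose a b) i)))"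
    by (rule match_weight_update) (use assms in auto)
  with assms show ?thesis by (simp del: sum_of_bool_eq add: ac_simps)
qed

lemma match_weight_3cycle:
  assumes "a < m" "b < m" "c < m" "a \<noteq> b" "b \<noteq> c" "a \<noteq> c"
  shows "match_weight B m (\<sigma> \<circ> transpose a b \<circ> transpose b c)
         + of_bool (B a (\<sigma> a)) + of_bool (B b (\<sigma> b)) + of_bool (B c (\<sigma> c))
       = match_weight B m \<sigma> + of_bool (B a (\<sigma> b)) + of_bool (B b (\<sigma> c)) + of_bool (B c (\<sigma> a))"
proof -
  let ?\<tau> = "\<sigma> \<circ> transpose a b \<circ> transpose b c"
  have "match_weight B m ?\<tau> + (\<Sum>i\<in>{a, b, c}. of_bool (B i (\<sigma> i)))
      = match_weight B m \<sigma> + (\<Sum>i\<in>{a, b, c}. of_bool (B i (?\<tau> i)))"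
    by (rule match_weight_update) (use assms in \<open>auto simp: transpose_def\<close>)
  with assms show ?thesis by (simp del: sum_of_bool_eq add: ac_simps)
qed

lemma bij_betw_comp_transpose:
  "bij_betw \<sigma> A A \<Longrightarrow> a \<in> A \<Longrightarrow> b \<in> A \<Longrightarrow> bij_betw (\<sigma> \<circ> transpose a b) A A"
  by (rule bij_betw_trans) simp_all

section \<open>Biregular matrices and the exceptional pattern\<close>

definition biregular :: "(nat \<Rightarrow> nat \<Rightarrow> bool) \<Rightarrow> nat \<Rightarrow> nat \<Rightarrow> bool" where
  "biregular B m d \<longleftrightarrow>
     (\<forall>i<m. card {j. j < m \<and> B i j} = d) \<and> (\<forall>j<m. card {i. i < m \<and> B i j} = d)"

(* The biadjacency matrix of two disjoint copies of K_{n,n}. *)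
definition xor_pattern :: "(nat \<Rightarrow> nat \<Rightarrow> bool) \<Rightarrow> nat \<Rightarrow> bool" where
  "xor_pattern B m \<longleftrightarrow> (\<exists>R C. \<forall>i<m. \<forall>j<m. B i j = (i \<in> R \<longleftrightarrow> j \<in> C))"

lemma xor_pattern_compl: "xor_pattern (\<lambda>i j. \<not> B i j) m \<longleftrightarrow> xor_pattern B m"
proof -
  have compl: "xor_pattern (\<lambda>i j. \<not> A i j) m" if A: "xor_pattern A m" for A
  proof -
    obtain R C where "\<forall>i<m. \<forall>j<m. A i j = (i \<in> R \<longleftrightarrow> j \<in> C)"
      using A unfolding xor_pattern_def by (elim exE)
    then show ?thesis
      unfolding xor_pattern_def by (intro exI[of _ R] exI[of _ "- C"]) simp
  qed
  show ?thesis using compl[of B] compl[of "\<lambda>i j. \<not> B i j"] by auto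
qed

lemma xor_pattern_permute_columns:
  assumes "xor_pattern (\<lambda>i j. B i (\<sigma> j)) m" and \<sigma>: "bij_betw \<sigma> {..<m} {..<m}"
  shows "xor_pattern B m"
proof -
  obtain R C where RC: "\<forall>i<m. \<forall>j<m. B i (\<sigma> j) = (i \<in> R \<longleftrightarrow> j \<in> C)"
    using assms(1) unfolding xor_pattern_def by (elim exE)
  have "B i j = (i \<in> R \<longleftrightarrow> inv_into {..<m} \<sigma> j \<in> C)" if "i < m" "j < m" for i j
  proof -
    have "inv_into {..<m} \<sigma> j < m"
      using bij_betw_apply[OF bij_betw_inv_into[OF \<sigma>]] \<open>j < m\<close> by simp
    moreover have "\<sigma> (inv_into {..<m} \<sigma> j) = j"
      using bij_betw_inv_into_right[OF \<sigma>] \<open>j < m\<close> by simp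
    ultimately show ?thesis using RC \<open>i < m\<close> by metis
  qed
  then show ?thesis
    unfolding xor_pattern_def by (intro exI[of _ R] exI[of _ "{j. inv_into {..<m} \<sigma> j \<in> C}"]) simp
qed

lemma biregular_permute_columns:
  assumes "biregular B m d" and \<sigma>: "bij_betw \<sigma> {..<m} {..<m}"
  shows "biregular (\<lambda>i j. B i (\<sigma> j)) m d"
  unfolding biregular_def
proof (intro conjI allI impI)
  fix i assume "i < m"
  have "\<sigma> ` {j. j < m \<and> B i (\<sigma> j)} = \<sigma> ` {..<m} \<inter> {j. B i j}"
    by blast
  also have "\<dots> = {j. j < m \<and> B i j}"
    using bij_betw_imp_surj_on[OF \<sigma>] by auto
  finally have "\<sigma> ` {j. j < m \<and> B i (\<sigma> j)} = {j. j < m \<and> B i j}" .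
  then have "bij_betw \<sigma> {j. j < m \<and> B i (\<sigma> j)} {j. j < m \<and> B i j}"
    by (intro bij_betw_subset[OF \<sigma>]) auto
  then show "card {j. j < m \<and> B i (\<sigma> j)} = d"
    using assms(1) \<open>i < m\<close> by (simp add: bij_betw_same_card biregular_def)
next
  fix j assume "j < m"
  then have "\<sigma> j < m" using bij_betw_apply[OF \<sigma>] by simp
  then show "card {i. i < m \<and> B i (\<sigma> j)} = d"
    using assms(1) by (simp add: biregular_def)
qed

lemma xor_pattern_card_columns:
  assumes rows: "\<forall>i<2*n. card {j. j < 2*n \<and> B i j} = n"
    and RC: "\<forall>i<2*n. \<forall>j<2*n. B i j = (i \<in> R \<longleftrightarrow> j \<in> C)"
  shows "card ({..<2*n} \<inter> C) = n"
proof (cases "n = 0")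
  case False
  then have "0 < 2*n" by simp
  then have row0: "card {j. j < 2*n \<and> B 0 j} = n"
    using rows by blast
  show ?thesis
  proof (cases "0 \<in> R")
    case True
    then have "{j. j < 2*n \<and> B 0 j} = {..<2*n} \<inter> C"
      using RC \<open>0 < 2*n\<close> by auto
    then show ?thesis using row0 by simp
  next
    case False
    then have "{j. j < 2*n \<and> B 0 j} = {..<2*n} - C"
      using RC \<open>0 < 2*n\<close> by auto
    then have "2*n - card ({..<2*n} \<inter> C) = n"
      using row0 by (simp add: card_Diff_subset_Int)
    then show ?thesis using \<open>n \<noteq> 0\<close> by linarith
  qed
qed simp

lemma xor_pattern_halves:
  assumes "biregular B (2*n) n" and "xor_pattern B (2*n)"
  obtains R C where "R \<subseteq> {..<2*n}" "card R = n" "C \<subseteq> {..<2*n}" "card C = n"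
    "\<And>i j. i < 2*n \<Longrightarrow> j < 2*n \<Longrightarrow> B i j = (i \<in> R \<longleftrightarrow> j \<in> C)"
proof -
  obtain R C where RC: "\<forall>i<2*n. \<forall>j<2*n. B i j = (i \<in> R \<longleftrightarrow> j \<in> C)"
    using assms(2) unfolding xor_pattern_def by (elim exE)
  have rows: "\<forall>i<2*n. card {j. j < 2*n \<and> B i j} = n"
    and cols: "\<forall>j<2*n. card {i. i < 2*n \<and> B i j} = n"
    using assms(1) unfolding biregular_def by simp_all
  have RC': "\<forall>j<2*n. \<forall>i<2*n. B i j = (j \<in> C \<longleftrightarrow> i \<in> R)"
    using RC by auto
  have "card ({..<2*n} \<inter> C) = n"
    using rows RC by (rule xor_pattern_card_columns)
  moreover have "card ({..<2*n} \<inter> R) = n"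
    using cols RC' by (rule xor_pattern_card_columns[where B = "\<lambda>j i. B i j"])
  moreover have "B i j = (i \<in> {..<2*n} \<inter> R \<longleftrightarrow> j \<in> {..<2*n} \<inter> C)" if "i < 2*n" "j < 2*n" for i j
    using RC that by simp
  ultimately show ?thesis by (intro that[of "{..<2*n} \<inter> R" "{..<2*n} \<inter> C"]) auto
qed

lemma xor_pattern_match_weight_even:
  assumes "biregular B (2*n) n" and "xor_pattern B (2*n)"
    and \<sigma>: "bij_betw \<sigma> {..<2*n} {..<2*n}"
  shows "even (match_weight B (2*n) \<sigma>)"
proof -
  obtain R C where R: "R \<subseteq> {..<2*n}" "card R = n" and C: "C \<subseteq> {..<2*n}" "card C = n"
    and RC: "\<And>i j. i < 2*n \<Longrightarrow> j < 2*n \<Longrightarrow> B i j = (i \<in> R \<longleftrightarrow> j \<in> C)"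
    using xor_pattern_halves[OF assms(1,2)] by blast
  have "\<sigma> ` ({..<2*n} \<inter> {i. \<sigma> i \<in> C}) = \<sigma> ` {..<2*n} \<inter> C"
    by blast
  then have "bij_betw \<sigma> ({..<2*n} \<inter> {i. \<sigma> i \<in> C}) C"
    using C(1) bij_betw_imp_surj_on[OF \<sigma>] by (intro bij_betw_subset[OF \<sigma>]) auto
  then have preimage: "card ({..<2*n} \<inter> {i. \<sigma> i \<in> C}) = n"
    using C(2) by (simp add: bij_betw_same_card)
  have weight: "match_weight B (2*n) \<sigma> = (\<Sum>i<2*n. of_bool (i \<in> R \<longleftrightarrow> \<sigma> i \<in> C))"
    unfolding match_weight_eq_sum using RC bij_betw_apply[OF \<sigma>] by (intro sum.cong) auto
  txt \<open>Every summand below is even, so the weight has the parity of card R + card C + 2n.\<close>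
  have "of_bool (p \<longleftrightarrow> q) + of_bool p + of_bool q + 1 \<in> {2, 4::nat}" for p q
    by (cases p; cases q) simp_all
  then have "even (\<Sum>i<2*n. of_bool (i \<in> R \<longleftrightarrow> \<sigma> i \<in> C) + of_bool (i \<in> R) + of_bool (\<sigma> i \<in> C) + 1 :: nat)"
    by (intro dvd_sum) auto
  also have "(\<Sum>i<2*n. of_bool (i \<in> R \<longleftrightarrow> \<sigma> i \<in> C) + of_bool (i \<in> R) + of_bool (\<sigma> i \<in> C) + 1 :: nat)
      = match_weight B (2*n) \<sigma> + n + n + 2*n"
    using R preimage unfolding weight sum.distrib by (simp add: Int_absorb1)
  finally show ?thesis by simp
qed

lemma ex_bij_betw_halves:
  assumes "finite U" "card (U \<inter> A) = n" "card (U - A) = n"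
  obtains h where "bij_betw h U (UNIV \<times> {..<n})" "\<And>i. i \<in> U \<Longrightarrow> fst (h i) = (i \<in> A)"
proof -
  obtain g1 where g1: "bij_betw g1 (U \<inter> A) {..<n}"
    using assms finite_same_card_bij[of "U \<inter> A" "{..<n}"] by auto
  obtain g2 where g2: "bij_betw g2 (U - A) {..<n}"
    using assms finite_same_card_bij[of "U - A" "{..<n}"] by auto
  define h where "h i = (if i \<in> A then (True, g1 i) else (False, g2 i))" for i
  have "bij_betw h (U \<inter> A) ({True} \<times> {..<n})"
    using g1 by (auto simp: h_def bij_betw_def inj_on_def)
  moreover have "bij_betw h (U - A) ({False} \<times> {..<n})"
    using g2 by (auto simp: h_def bij_betw_def inj_on_def)
  ultimately have "bij_betw h ((U \<inter> A) \<union> (U - A)) ({True} \<times> {..<n} \<union> {False} \<times> {..<n})"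
    by (rule bij_betw_combine) auto
  moreover have "(U \<inter> A) \<union> (U - A) = U" "{True} \<times> {..<n} \<union> {False} \<times> {..<n} = UNIV \<times> {..<n}"
    by auto
  ultimately show ?thesis by (intro that[of h]) (auto simp: h_def)
qed

lemma bij_betw_tag_middle:
  assumes "bij_betw h A (UNIV \<times> T)"
  shows "bij_betw (\<lambda>x. (fst (h x), s, snd (h x))) A (UNIV \<times> {s} \<times> T)"
proof -
  have "bij_betw (\<lambda>p. (fst p, s, snd p)) (UNIV \<times> T) (UNIV \<times> {s} \<times> T)"
    by (rule bij_betw_byWitness[where f' = "\<lambda>(c, _, t). (c, t)"]) auto
  from bij_betw_trans[OF assms this] show ?thesis by (simp add: comp_def)
qed

lemma xor_pattern_graph_iso:
  assumes "biregular B (2*n) n" and "xor_pattern B (2*n)"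
  shows "graph_iso (bip_vertices (2*n)) (blue_adj B) (two_Knn_vertices n) two_Knn_adj"
proof -
  obtain R C where R: "R \<subseteq> {..<2*n}" "card R = n" and C: "C \<subseteq> {..<2*n}" "card C = n"
    and RC: "\<And>i j. i < 2*n \<Longrightarrow> j < 2*n \<Longrightarrow> B i j = (i \<in> R \<longleftrightarrow> j \<in> C)"
    using xor_pattern_halves[OF assms] by blast
  have "card ({..<2*n} - R) = n" "card ({..<2*n} - C) = n"
    using R C by (simp_all add: card_Diff_subset finite_subset)
  moreover have "{..<2*n} \<inter> R = R" "{..<2*n} \<inter> C = C"
    using R C by auto
  ultimately obtain hR hC
    where hR: "bij_betw hR {..<2*n} (UNIV \<times> {..<n})" "\<And>i. i < 2*n \<Longrightarrow> fst (hR i) = (i \<in> R)"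
      and hC: "bij_betw hC {..<2*n} (UNIV \<times> {..<n})" "\<And>j. j < 2*n \<Longrightarrow> fst (hC j) = (j \<in> C)"
    using ex_bij_betw_halves[of "{..<2*n}" R n] ex_bij_betw_halves[of "{..<2*n}" C n] R C
    by (metis finite_lessThan lessThan_iff)
  define f where "f = case_sum (\<lambda>i. (fst (hR i), False, snd (hR i))) (\<lambda>j. (fst (hC j), True, snd (hC j)))"
  have "bij_betw f (Inl ` {..<2*n}) (UNIV \<times> {False} \<times> {..<n})"
    by (simp add: f_def comp_def bij_betw_comp_iff[OF inj_on_imp_bij_betw[OF inj_Inl]]
        bij_betw_tag_middle[OF hR(1)])
  moreover have "bij_betw f (Inr ` {..<2*n}) (UNIV \<times> {True} \<times> {..<n})"
    by (simp add: f_def comp_def bij_betw_comp_iff[OF inj_on_imp_bij_betw[OF inj_Inr]]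
        bij_betw_tag_middle[OF hC(1)])
  ultimately have "bij_betw f (Inl ` {..<2*n} \<union> Inr ` {..<2*n})
      (UNIV \<times> {False} \<times> {..<n} \<union> UNIV \<times> {True} \<times> {..<n})"
    by (rule bij_betw_combine) auto
  moreover have "UNIV \<times> {False} \<times> {..<n} \<union> UNIV \<times> {True} \<times> {..<n} = two_Knn_vertices n"
    by (auto simp: two_Knn_vertices_def)
  ultimately have bij: "bij_betw f (bip_vertices (2*n)) (two_Knn_vertices n)"
    by (simp add: bip_vertices_def)
  have "blue_adj B u v \<longleftrightarrow> two_Knn_adj (f u) (f v)"
    if "u \<in> bip_vertices (2*n)" "v \<in> bip_vertices (2*n)" for u v
    using that RC hR(2) hC(2) by (auto simp: bip_vertices_def f_def two_Knn_adj_def)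
  with bij show ?thesis unfolding graph_iso_def by blast
qed

section \<open>Matchings without a unit gain\<close>

(* M is the colour matrix with its columns permuted by a matching sigma, M i j = B i (sigma j), so
   that the matching becomes the diagonal. The assumptions say that no transposition and no 3-cycle
   of the columns increases the number of true diagonal entries by exactly one (compare
   match_weight_transpose and match_weight_3cycle); y0 is a false diagonal entry. *)
locale no_unit_gain =
  fixes M :: "nat \<Rightarrow> nat \<Rightarrow> bool" and n y0 :: nat
  assumes biregular: "biregular M (2*n) n"
    and swap_gain: "\<And>a b. a < 2*n \<Longrightarrow> b < 2*n \<Longrightarrow> a \<noteq> b \<Longrightarrow>
      of_bool (M a b) + of_bool (M b a) \<noteq> (1::nat) + of_bool (M a a) + of_bool (M b b)"
    and cycle_gain: "\<And>a b c. a < 2*n \<Longrightarrow> b < 2*n \<Longrightarrow> c < 2*n \<Longrightarrow> a \<noteq> b \<Longrightarrow> b \<noteq> c \<Longrightarrow> a \<noteq> c \<Longrightarrow>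
      of_bool (M a b) + of_bool (M b c) + of_bool (M c a)
        \<noteq> (1::nat) + of_bool (M a a) + of_bool (M b b) + of_bool (M c c)"
    and y0: "y0 < 2*n" "\<not> M y0 y0"
begin

(* A lemma named A_B describes the block
   of M with rows in A and columns in B. It turns out that Zs = {} and that
   M i j <-> (i : Ps Un Os <-> j : Qs Un Os). *)
definition "Ys = {i. i < 2*n \<and> \<not> M i i}"
definition "Xs = {i. i < 2*n \<and> M i i}"
definition "Qs = {q \<in> Ys. M y0 q}"
definition "Ps = Ys - Qs"
definition "Os = {x \<in> Xs. M y0 x}"
definition "Is = {x \<in> Xs. M x y0}"
definition "Zs = Xs - Os - Is"

lemmas class_defs = Ys_def Xs_def Qs_def Ps_def Os_def Is_def Zs_def

lemma row_card: "i < 2*n \<Longrightarrow> card {j. j < 2*n \<and> M i j} = n"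
  using biregular by (simp add: biregular_def)

lemma col_card: "j < 2*n \<Longrightarrow> card {i. i < 2*n \<and> M i j} = n"
  using biregular by (simp add: biregular_def)

lemma swap_Ys_Xs: "y \<in> Ys \<Longrightarrow> x \<in> Xs \<Longrightarrow> M y x \<Longrightarrow> M x y \<Longrightarrow> False"
  using swap_gain[of y x] by (auto simp: Ys_def Xs_def)

lemma Ys_sym: "y \<in> Ys \<Longrightarrow> y' \<in> Ys \<Longrightarrow> M y y' = M y' y"
  using swap_gain[of y y'] by (cases "y = y'") (auto simp: Ys_def)

lemma cycle_Ys_Ys_Xs: "y \<in> Ys \<Longrightarrow> y' \<in> Ys \<Longrightarrow> x \<in> Xs \<Longrightarrow> y \<noteq> y' \<Longrightarrow> M y y' \<Longrightarrow> M y' x = M x y"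
  using cycle_gain[of y y' x] by (cases "x = y"; cases "x = y'") (auto simp: Ys_def Xs_def)

lemma cycle_Ys_Xs_Xs:
  "y \<in> Ys \<Longrightarrow> x \<in> Xs \<Longrightarrow> x' \<in> Xs \<Longrightarrow> x \<noteq> x' \<Longrightarrow> M y x \<Longrightarrow> M x x' \<Longrightarrow> M x' y \<Longrightarrow> False"
  using cycle_gain[of y x x'] by (auto simp: Ys_def Xs_def)

lemma cycle_Ys_Ys_Ys:
  "y \<in> Ys \<Longrightarrow> y' \<in> Ys \<Longrightarrow> z \<in> Ys \<Longrightarrow> y \<noteq> y' \<Longrightarrow> y' \<noteq> z \<Longrightarrow> y \<noteq> z \<Longrightarrow>
    M y y' \<Longrightarrow> \<not> M y' z \<Longrightarrow> \<not> M z y \<Longrightarrow> False"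
  using cycle_gain[of y y' z] by (auto simp: Ys_def)

lemma finite_classes:
  "finite Ys" "finite Xs" "finite Qs" "finite Ps" "finite Os" "finite Is" "finite Zs"
  by (simp_all add: class_defs)

lemma classes_disjoint:
  "Ps \<inter> Qs = {}" "Ps \<inter> Os = {}" "Ps \<inter> Is = {}" "Ps \<inter> Zs = {}"
  "Qs \<inter> Os = {}" "Qs \<inter> Is = {}" "Qs \<inter> Zs = {}" "Os \<inter> Zs = {}" "Is \<inter> Zs = {}"
  "Os \<inter> Is = {}"
  using swap_Ys_Xs y0 by (auto simp: class_defs)

lemma classes_cover: "i < 2*n \<longleftrightarrow> i \<in> Ps \<or> i \<in> Qs \<or> i \<in> Os \<or> i \<in> Is \<or> i \<in> Zs"
  by (auto simp: class_defs)

lemma classes_cases: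
  assumes "i < 2*n"
  obtains (Ps) "i \<in> Ps" | (Qs) "i \<in> Qs" | (Os) "i \<in> Os" | (Is) "i \<in> Is" | (Zs) "i \<in> Zs"
  using assms by (auto simp: class_defs)

lemma y0_Ps: "y0 \<in> Ps" and y0_Ys: "y0 \<in> Ys"
  using y0 by (simp_all add: class_defs)

lemma card_Qs_Os: "card Qs + card Os = n"
proof -
  have "{j. j < 2*n \<and> M y0 j} = Qs \<union> Os"
    by (auto simp: class_defs)
  then show ?thesis
    using row_card[OF y0(1)] finite_classes classes_disjoint by (simp add: card_Un_disjoint)
qed

lemma card_Qs_Is: "card Qs + card Is = n"
proof -
  have "{i. i < 2*n \<and> M i y0} = Qs \<union> Is"
    using Ys_sym y0 by (auto simp: class_defs)
  then show ?thesis
    using col_card[OF y0(1)] finite_classes classes_disjoint by (simp add: card_Un_disjoint)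
qed

lemma card_Qs: "card Qs = card Ps + card Zs"
proof -
  have "Ps \<union> Qs \<union> Os \<union> Is \<union> Zs = {..<2*n}"
    using classes_cover by auto
  then have "card (Ps \<union> Qs \<union> Os \<union> Is \<union> Zs) = 2*n"
    by simp
  then have "card Ps + card Qs + card Os + card Is + card Zs = 2*n"
    using finite_classes classes_disjoint by (simp add: card_Un_disjoint Int_Un_distrib2)
  then show ?thesis using card_Qs_Os card_Qs_Is by linarith
qed

lemma Qs_nonempty: "Qs \<noteq> {}"
  using card_Qs y0_Ps finite_classes by (auto simp: card_gt_0_iff)

lemma class_subsets: "Ps \<subseteq> Ys" "Qs \<subseteq> Ys" "Os \<subseteq> Xs" "Is \<subseteq> Xs" "Zs \<subseteq> Xs"
  by (auto simp: class_defs)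

lemma Ps_Qs:
  assumes "z \<in> Ps" "q \<in> Qs"
  shows "M q z \<and> M z q"
proof -
  have q: "q \<in> Ys" "M y0 q" and z: "z \<in> Ys" "\<not> M y0 z"
    using assms by (auto simp: class_defs)
  have "M q z"
  proof (cases "z = y0")
    case True
    then show ?thesis using Ys_sym q z by blast
  next
    case False
    have "\<not> M z y0" using Ys_sym y0_Ys z by blast
    moreover have "q \<noteq> y0" "z \<noteq> q" using q z y0(2) by auto
    ultimately show ?thesis using cycle_Ys_Ys_Ys[OF y0_Ys q(1) z(1)] q z False by blast
  qed
  then show ?thesis using Ys_sym q(1) z(1) by blast
qed

lemma Qs_Xs:
  assumes "q \<in> Qs" "x \<in> Xs"
  shows "M q x \<longleftrightarrow> x \<in> Is"
proof -
  have "q \<in> Ys" "M y0 q" "y0 \<noteq> q" using assms(1) y0(2) by (auto simp: class_defs)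
  then have "M q x = M x y0" using cycle_Ys_Ys_Xs[OF y0_Ys _ assms(2)] by blast
  then show ?thesis using assms(2) by (simp add: Is_def)
qed

lemma Xs_Qs:
  assumes "q \<in> Qs" "x \<in> Xs"
  shows "M x q \<longleftrightarrow> x \<in> Os"
proof -
  have "q \<in> Ys" "M q y0" "y0 \<noteq> q" using assms(1) y0(2) Ys_sym y0_Ys by (auto simp: class_defs)
  then have "M y0 x = M x q" using cycle_Ys_Ys_Xs[OF _ y0_Ys assms(2)] by blast
  then show ?thesis using assms(2) by (simp add: Os_def)
qed

lemma Ps_Xs:
  assumes "z \<in> Ps" "x \<in> Xs"
  shows "M z x \<longleftrightarrow> x \<in> Os"
proof -
  obtain q where q: "q \<in> Qs" using Qs_nonempty by blast
  have "q \<noteq> z" using q assms(1) classes_disjoint by blast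
  then have "M z x = M x q"
    using cycle_Ys_Ys_Xs[of q z x] Ps_Qs[OF assms(1) q] q assms class_subsets by blast
  then show ?thesis using Xs_Qs[OF q assms(2)] by simp
qed

lemma Xs_Ps:
  assumes "z \<in> Ps" "x \<in> Xs"
  shows "M x z \<longleftrightarrow> x \<in> Is"
proof -
  obtain q where q: "q \<in> Qs" using Qs_nonempty by blast
  have "z \<noteq> q" using q assms(1) classes_disjoint by blast
  then have "M q x = M x z"
    using cycle_Ys_Ys_Xs[of z q x] Ps_Qs[OF assms(1) q] q assms class_subsets by blast
  then show ?thesis using Qs_Xs[OF q assms(2)] by simp
qed

lemma Is_Os:
  assumes "x \<in> Is" "x' \<in> Os"
  shows "\<not> M x x'"
proof -
  obtain q where q: "q \<in> Qs" using Qs_nonempty by blast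
  have "q \<in> Ys" "x \<in> Xs" "x' \<in> Xs" using q assms class_subsets by blast+
  moreover have "x \<noteq> x'" using assms classes_disjoint by blast
  moreover have "M q x" using Qs_Xs[OF q \<open>x \<in> Xs\<close>] assms(1) by simp
  moreover have "M x' q" using Xs_Qs[OF q \<open>x' \<in> Xs\<close>] assms(2) by simp
  ultimately show ?thesis using cycle_Ys_Xs_Xs by blast
qed

lemma row_eq_superset:
  assumes "i < 2*n" "S \<subseteq> {j. j < 2*n \<and> M i j}" "n \<le> card S"
  shows "{j. j < 2*n \<and> M i j} = S"
  using card_seteq[of "{j. j < 2*n \<and> M i j}" S] assms row_card[OF assms(1)] by auto

lemma row_eq_subset:
  assumes "i < 2*n" "{j. j < 2*n \<and> M i j} \<subseteq> S" "finite S" "card S \<le> n"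
  shows "{j. j < 2*n \<and> M i j} = S"
  using card_seteq[of S "{j. j < 2*n \<and> M i j}"] assms row_card[OF assms(1)] by auto

lemma col_eq_superset:
  assumes "j < 2*n" "S \<subseteq> {i. i < 2*n \<and> M i j}" "n \<le> card S"
  shows "{i. i < 2*n \<and> M i j} = S"
  using card_seteq[of "{i. i < 2*n \<and> M i j}" S] assms col_card[OF assms(1)] by auto

lemma col_eq_subset:
  assumes "j < 2*n" "{i. i < 2*n \<and> M i j} \<subseteq> S" "finite S" "card S \<le> n"
  shows "{i. i < 2*n \<and> M i j} = S"
  using card_seteq[of S "{i. i < 2*n \<and> M i j}"] assms col_card[OF assms(1)] by auto

lemma card_unions:
  "card (Ps \<union> Is \<union> Zs) = n" "card (Ps \<union> Os \<union> Zs) = n" "card (Qs \<union> Is) = n" "card (Qs \<union> Os) = n"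
  using card_Qs card_Qs_Is card_Qs_Os finite_classes classes_disjoint
  by (simp_all add: card_Un_disjoint Int_Un_distrib2)

lemma row_Is_Zs:
  assumes "x \<in> Is"
  shows "{j. j < 2*n \<and> M x j} = Ps \<union> Is \<union> Zs"
proof -
  have x: "x < 2*n" "x \<in> Xs" "x \<notin> Os"
    using assms classes_disjoint class_subsets by (auto simp: Xs_def)
  have "j \<in> Ps \<union> Is \<union> Zs" if "j < 2*n" "M x j" for j
    using \<open>j < 2*n\<close>
  proof (cases rule: classes_cases)
    case Qs
    then show ?thesis using Xs_Qs[OF Qs x(2)] x(3) that(2) by simp
  next
    case Os
    then show ?thesis using Is_Os[OF assms Os] that(2) by simp
  qed simp_all
  then have "{j. j < 2*n \<and> M x j} \<subseteq> Ps \<union> Is \<union> Zs" by blast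
  then show ?thesis
    using finite_classes card_unions by (intro row_eq_subset[OF x(1)]) auto
qed

lemma col_Os_Zs:
  assumes "x \<in> Os"
  shows "{i. i < 2*n \<and> M i x} = Ps \<union> Os \<union> Zs"
proof -
  have x: "x < 2*n" "x \<in> Xs" "x \<notin> Is"
    using assms classes_disjoint class_subsets by (auto simp: Xs_def)
  have "i \<in> Ps \<union> Os \<union> Zs" if "i < 2*n" "M i x" for i
    using \<open>i < 2*n\<close>
  proof (cases rule: classes_cases)
    case Qs
    then show ?thesis using Qs_Xs[OF Qs x(2)] x(3) that(2) by simp
  next
    case Is
    then show ?thesis using Is_Os[OF Is assms] that(2) by simp
  qed simp_all
  then have "{i. i < 2*n \<and> M i x} \<subseteq> Ps \<union> Os \<union> Zs" by blast
  then show ?thesis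
    using finite_classes card_unions by (intro col_eq_subset[OF x(1)]) auto
qed

lemma col_Is:
  assumes "x \<in> Is"
  shows "{i. i < 2*n \<and> M i x} = Qs \<union> Is"
proof -
  have x: "x < 2*n" "x \<in> Xs" using assms by (auto simp: class_defs)
  have "M i x" if "i \<in> Qs \<union> Is" for i
    using that row_Is_Zs assms Qs_Xs[OF _ x(2)] by blast
  moreover have "i < 2*n" if "i \<in> Qs \<union> Is" for i
    using that by (auto simp: class_defs)
  ultimately have "Qs \<union> Is \<subseteq> {i. i < 2*n \<and> M i x}" by blast
  then show ?thesis
    using card_unions by (intro col_eq_superset[OF x(1)]) auto
qed

lemma Zs_empty: "Zs = {}"
proof (rule ccontr)
  assume "Zs \<noteq> {}"
  then obtain w where w: "w \<in> Zs" by blast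
  txt \<open>The row of w avoids Ps, Qs and Is, but Os \<union> Zs has only n - card Ps elements.\<close>
  have "w < 2*n" "w \<in> Xs" "w \<notin> Os" "w \<notin> Qs \<union> Is"
    using w classes_disjoint class_subsets by (auto simp: Xs_def)
  have "j \<in> Os \<union> Zs" if "j < 2*n" "M w j" for j
    using \<open>j < 2*n\<close>
  proof (cases rule: classes_cases)
    case Ps
    then show ?thesis using Xs_Ps[OF Ps \<open>w \<in> Xs\<close>] \<open>w \<notin> Qs \<union> Is\<close> that(2) by simp
  next
    case Qs
    then show ?thesis using Xs_Qs[OF Qs \<open>w \<in> Xs\<close>] \<open>w \<notin> Os\<close> that(2) by simp
  next
    case Is
    have "w \<in> {i. i < 2*n \<and> M i j} \<longleftrightarrow> w \<in> Qs \<union> Is"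
      by (simp only: col_Is[OF Is])
    then show ?thesis using \<open>w < 2*n\<close> \<open>w \<notin> Qs \<union> Is\<close> that(2) by simp
  qed simp_all
  then have "{j. j < 2*n \<and> M w j} \<subseteq> Os \<union> Zs" by blast
  then have "card {j. j < 2*n \<and> M w j} \<le> card (Os \<union> Zs)"
    using finite_classes by (intro card_mono) auto
  then have "n \<le> card (Os \<union> Zs)"
    using row_card[OF \<open>w < 2*n\<close>] by simp
  moreover have "card (Os \<union> Zs) = card Os + card Zs"
    using finite_classes classes_disjoint by (simp add: card_Un_disjoint)
  moreover have "0 < card Ps"
    using y0_Ps finite_classes card_gt_0_iff by blast
  ultimately show False using card_Qs card_Qs_Os by linarith
qed

lemma classes_bound: "Ps \<union> Qs \<union> Os \<union> Is \<union> Zs \<subseteq> {..<2*n}"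
  by (auto simp: class_defs)

lemma row_Ps:
  assumes "z \<in> Ps"
  shows "{j. j < 2*n \<and> M z j} = Qs \<union> Os"
proof (rule row_eq_superset)
  have "M z j" if "j \<in> Qs \<union> Os" for j
    using that Ps_Qs[OF assms] Ps_Xs[OF assms] class_subsets by blast
  then show "Qs \<union> Os \<subseteq> {j. j < 2*n \<and> M z j}"
    using classes_bound by blast
qed (use assms classes_bound card_unions in auto)

lemma row_Qs:
  assumes "q \<in> Qs"
  shows "{j. j < 2*n \<and> M q j} = Ps \<union> Is"
proof (rule row_eq_superset)
  have "M q j" if "j \<in> Ps \<union> Is" for j
    using that Ps_Qs[OF _ assms] Qs_Xs[OF assms] class_subsets by blast
  then show "Ps \<union> Is \<subseteq> {j. j < 2*n \<and> M q j}"
    using classes_bound by blast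
qed (use assms classes_bound card_unions Zs_empty in auto)

lemma row_Os:
  assumes "x \<in> Os"
  shows "{j. j < 2*n \<and> M x j} = Qs \<union> Os"
proof (rule row_eq_superset)
  have "M x j" if "j \<in> Qs \<union> Os" for j
    using that Xs_Qs[OF _ ] col_Os_Zs assms class_subsets by blast
  then show "Qs \<union> Os \<subseteq> {j. j < 2*n \<and> M x j}"
    using classes_bound by blast
qed (use assms classes_bound card_unions in auto)

lemma row_Is: "x \<in> Is \<Longrightarrow> {j. j < 2*n \<and> M x j} = Ps \<union> Is"
  using row_Is_Zs Zs_empty by simp

theorem xor_pattern_M: "xor_pattern M (2*n)"
proof -
  have row: "{j. j < 2*n \<and> M i j} = (if i \<in> Ps \<union> Os then Qs \<union> Os else Ps \<union> Is)"
    if "i < 2*n" for i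
    using that
  proof (cases rule: classes_cases)
    case Ps
    then show ?thesis using row_Ps by simp
  next
    case Qs
    then show ?thesis using row_Qs classes_disjoint by auto
  next
    case Os
    then show ?thesis using row_Os by simp
  next
    case Is
    then show ?thesis using row_Is classes_disjoint by auto
  qed (simp add: Zs_empty)
  have other: "j \<in> Ps \<union> Is \<longleftrightarrow> j \<notin> Qs \<union> Os" if "j < 2*n" for j
    using that by (cases rule: classes_cases) (use classes_disjoint Zs_empty in auto)
  have pattern: "M i j = (i \<in> Ps \<union> Os \<longleftrightarrow> j \<in> Qs \<union> Os)" if "i < 2*n" "j < 2*n" for i j
  proof -
    have "M i j \<longleftrightarrow> j \<in> {j. j < 2*n \<and> M i j}" using that by simp
    then show ?thesis using row[OF that(1)] other[OF that(2)] by auto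
  qed
  show ?thesis
    unfolding xor_pattern_def by (intro exI[of _ "Ps \<union> Os"] exI[of _ "Qs \<union> Os"]) (simp add: pattern)
qed

lemma mutual_partner: "\<exists>q<2*n. \<not> M q q \<and> M y0 q \<and> M q y0"
proof -
  obtain q where q: "q \<in> Qs" using Qs_nonempty by blast
  then have "q < 2*n" "\<not> M q q" "M y0 q" by (auto simp: Qs_def Ys_def)
  moreover have "M q y0" using Ps_Qs[OF y0_Ps q] by blast
  ultimately show ?thesis by blast
qed

end

section \<open>Every admissible weight is attained\<close>

lemma no_unit_gain_if_no_unit_step:
  assumes reg: "biregular B (2*n) n" and \<sigma>: "bij_betw \<sigma> {..<2*n} {..<2*n}"
    and no_unit_step: "\<nexists>\<tau>. bij_betw \<tau> {..<2*n} {..<2*n} \<and>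
      match_weight B (2*n) \<tau> = match_weight B (2*n) \<sigma> + 1"
    and y0: "y0 < 2*n" "\<not> B y0 (\<sigma> y0)"
  shows "no_unit_gain (\<lambda>i j. B i (\<sigma> j)) n y0"
proof
  show "biregular (\<lambda>i j. B i (\<sigma> j)) (2*n) n"
    by (rule biregular_permute_columns[OF reg \<sigma>])
next
  fix a b assume ab: "a < 2*n" "b < 2*n" "a \<noteq> b"
  show "of_bool (B a (\<sigma> b)) + of_bool (B b (\<sigma> a)) \<noteq> (1::nat) + of_bool (B a (\<sigma> a)) + of_bool (B b (\<sigma> b))"
  proof
    assume "of_bool (B a (\<sigma> b)) + of_bool (B b (\<sigma> a)) = (1::nat) + of_bool (B a (\<sigma> a)) + of_bool (B b (\<sigma> b))"
    then have "match_weight B (2*n) (\<sigma> \<circ> transpose a b) = match_weight B (2*n) \<sigma> + 1"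
      using match_weight_transpose[OF ab, of B \<sigma>] by linarith
    moreover have "bij_betw (\<sigma> \<circ> transpose a b) {..<2*n} {..<2*n}"
      using ab by (intro bij_betw_comp_transpose[OF \<sigma>]) auto
    ultimately show False using no_unit_step by blast
  qed
next
  fix a b c assume abc: "a < 2*n" "b < 2*n" "c < 2*n" "a \<noteq> b" "b \<noteq> c" "a \<noteq> c"
  show "of_bool (B a (\<sigma> b)) + of_bool (B b (\<sigma> c)) + of_bool (B c (\<sigma> a))
      \<noteq> (1::nat) + of_bool (B a (\<sigma> a)) + of_bool (B b (\<sigma> b)) + of_bool (B c (\<sigma> c))"
  proof
    assume "of_bool (B a (\<sigma> b)) + of_bool (B b (\<sigma> c)) + of_bool (B c (\<sigma> a))
      = (1::nat) + of_bool (B a (\<sigma> a)) + of_bool (B b (\<sigma> b)) + of_bool (B c (\<sigma> c))"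
    then have "match_weight B (2*n) (\<sigma> \<circ> transpose a b \<circ> transpose b c) = match_weight B (2*n) \<sigma> + 1"
      using match_weight_3cycle[OF abc, of B \<sigma>] by linarith
    moreover have "bij_betw (\<sigma> \<circ> transpose a b \<circ> transpose b c) {..<2*n} {..<2*n}"
      using abc by (intro bij_betw_comp_transpose[OF bij_betw_comp_transpose[OF \<sigma>]]) auto
    ultimately show False using no_unit_step by blast
  qed
qed (use y0 in auto)

lemma match_weight_step:
  assumes reg: "biregular B (2*n) n" and \<sigma>: "bij_betw \<sigma> {..<2*n} {..<2*n}"
    and less: "match_weight B (2*n) \<sigma> < 2*n"
  shows "\<exists>\<tau>. bij_betw \<tau> {..<2*n} {..<2*n} \<and>
    match_weight B (2*n) \<tau> = match_weight B (2*n) \<sigma> + (if xor_pattern B (2*n) then 2 else 1)"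
proof (cases "\<exists>\<tau>. bij_betw \<tau> {..<2*n} {..<2*n} \<and> match_weight B (2*n) \<tau> = match_weight B (2*n) \<sigma> + 1")
  case True
  then obtain \<tau> where \<tau>: "bij_betw \<tau> {..<2*n} {..<2*n}" "match_weight B (2*n) \<tau> = match_weight B (2*n) \<sigma> + 1"
    by blast
  have "\<not> xor_pattern B (2*n)"
  proof
    assume "xor_pattern B (2*n)"
    then have "even (match_weight B (2*n) \<sigma>)" "even (match_weight B (2*n) \<tau>)"
      using xor_pattern_match_weight_even[OF reg] \<sigma> \<tau>(1) by blast+
    then show False using \<tau>(2) by simp
  qed
  with \<tau> show ?thesis by auto
next
  case False
  have "\<not> (\<forall>i<2*n. B i (\<sigma> i))"
  proof
    assume "\<forall>i<2*n. B i (\<sigma> i)"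
    then have "{i. i < 2*n \<and> B i (\<sigma> i)} = {..<2*n}" by auto
    then show False using less by (simp add: match_weight_def)
  qed
  then obtain y0 where y0: "y0 < 2*n" "\<not> B y0 (\<sigma> y0)" by auto
  interpret no_unit_gain "\<lambda>i j. B i (\<sigma> j)" n y0
    by (rule no_unit_gain_if_no_unit_step[OF reg \<sigma> False y0])
  obtain q where q: "q < 2*n" "\<not> B q (\<sigma> q)" "B y0 (\<sigma> q)" "B q (\<sigma> y0)"
    using mutual_partner by blast
  then have "y0 \<noteq> q" using y0 by auto
  then have "match_weight B (2*n) (\<sigma> \<circ> transpose y0 q) = match_weight B (2*n) \<sigma> + 2"
    using match_weight_transpose[OF y0(1) q(1), of B \<sigma>] q y0 by simp
  moreover have "bij_betw (\<sigma> \<circ> transpose y0 q) {..<2*n} {..<2*n}"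
    using y0 q by (intro bij_betw_comp_transpose[OF \<sigma>]) auto
  moreover have "xor_pattern B (2*n)"
    using xor_pattern_permute_columns[OF xor_pattern_M \<sigma>] .
  ultimately show ?thesis by auto
qed

lemma match_weight_steps:
  assumes step: "\<And>\<sigma>. bij_betw \<sigma> {..<m} {..<m} \<Longrightarrow> match_weight B m \<sigma> < m \<Longrightarrow>
      \<exists>\<tau>. bij_betw \<tau> {..<m} {..<m} \<and> match_weight B m \<tau> = match_weight B m \<sigma> + c"
    and "0 < c" and \<sigma>0: "bij_betw \<sigma>0 {..<m} {..<m}"
  shows "match_weight B m \<sigma>0 + c * k \<le> m \<Longrightarrow>
    \<exists>\<sigma>. bij_betw \<sigma> {..<m} {..<m} \<and> match_weight B m \<sigma> = match_weight B m \<sigma>0 + c * k"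
proof (induction k)
  case 0
  then show ?case using \<sigma>0 by auto
next
  case (Suc k)
  then obtain \<sigma> where \<sigma>: "bij_betw \<sigma> {..<m} {..<m}" "match_weight B m \<sigma> = match_weight B m \<sigma>0 + c * k"
    by auto
  moreover have "match_weight B m \<sigma> < m"
    using Suc.prems \<sigma>(2) \<open>0 < c\<close> by simp
  ultimately obtain \<tau> where "bij_betw \<tau> {..<m} {..<m}" "match_weight B m \<tau> = match_weight B m \<sigma> + c"
    using step by blast
  then show ?case using \<sigma>(2) by (auto simp: algebra_simps)
qed

lemma match_weight_attains:
  assumes reg: "biregular B (2*n) n" and reg': "biregular (\<lambda>i j. \<not> B i j) (2*n) n"
    and "w \<le> 2*n" and parity: "xor_pattern B (2*n) \<Longrightarrow> even w"
  shows "\<exists>\<sigma>. bij_betw \<sigma> {..<2*n} {..<2*n} \<and> match_weight B (2*n) \<sigma> = w"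
proof -
  txt \<open>Weights below that of the identity are reached by raising the weight of the complementary
    colouring.\<close>
  define c :: nat where "c = (if xor_pattern B (2*n) then 2 else 1)"
  let ?v0 = "match_weight B (2*n) id"
  have c: "0 < c" "c dvd w" "c dvd 2*n" "c dvd ?v0"
    using parity xor_pattern_match_weight_even[OF reg _ bij_betw_id] by (auto simp: c_def)
  have step: "\<exists>\<tau>. bij_betw \<tau> {..<2*n} {..<2*n} \<and> match_weight B (2*n) \<tau> = match_weight B (2*n) \<sigma> + c"
    if "bij_betw \<sigma> {..<2*n} {..<2*n}" "match_weight B (2*n) \<sigma> < 2*n" for \<sigma>
    using match_weight_step[OF reg that] by (simp add: c_def)
  have step': "\<exists>\<tau>. bij_betw \<tau> {..<2*n} {..<2*n} \<and>
      match_weight (\<lambda>i j. \<not> B i j) (2*n) \<tau> = match_weight (\<lambda>i j. \<not> B i j) (2*n) \<sigma> + c"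
    if "bij_betw \<sigma> {..<2*n} {..<2*n}" "match_weight (\<lambda>i j. \<not> B i j) (2*n) \<sigma> < 2*n" for \<sigma>
    using match_weight_step[OF reg' that] by (simp add: c_def xor_pattern_compl)
  show ?thesis
  proof (cases "?v0 \<le> w")
    case True
    then have "w = ?v0 + c * ((w - ?v0) div c)"
      using c by (simp add: dvd_diff_nat)
    then show ?thesis
      using match_weight_steps[OF step c(1) bij_betw_id, of "(w - ?v0) div c"] \<open>w \<le> 2*n\<close> by auto
  next
    case False
    have "match_weight (\<lambda>i j. \<not> B i j) (2*n) id + c * ((?v0 - w) div c) = 2*n - w"
      using False c match_weight_le[of B "2*n" id] by (simp add: match_weight_compl dvd_diff_nat)
    then obtain \<sigma> where "bij_betw \<sigma> {..<2*n} {..<2*n}" "match_weight (\<lambda>i j. \<not> B i j) (2*n) \<sigma> = 2*n - w"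
      using match_weight_steps[OF step' c(1) bij_betw_id, of "(?v0 - w) div c"] by auto
    then show ?thesis
      using \<open>w \<le> 2*n\<close> match_weight_le[of B "2*n" \<sigma>] by (auto simp: match_weight_compl)
  qed
qed

theorem theorem1:
  fixes k n :: nat and blue :: "nat \<Rightarrow> nat \<Rightarrow> bool"
  assumes "k \<le> 2 * n"
    and "\<forall>i<2*n. card {j. j < 2*n \<and> blue i j} = n \<and> card {j. j < 2*n \<and> \<not> blue i j} = n"
    and "\<forall>j<2*n. card {i. i < 2*n \<and> blue i j} = n \<and> card {i. i < 2*n \<and> \<not> blue i j} = n"
    and "\<not> (odd k \<and> graph_iso (bip_vertices (2*n)) (blue_adj blue) (two_Knn_vertices n) two_Knn_adj)"
  shows "\<exists>\<sigma>. bij_betw \<sigma> {..<2*n} {..<2*n}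
           \<and> card {i. i < 2*n \<and> \<not> blue i (\<sigma> i)} = k
           \<and> card {i. i < 2*n \<and> blue i (\<sigma> i)} = 2*n - k"
proof -
  have reg: "biregular blue (2*n) n" and reg': "biregular (\<lambda>i j. \<not> blue i j) (2*n) n"
    using assms(2,3) by (simp_all add: biregular_def)
  have "xor_pattern blue (2*n) \<Longrightarrow> even (2*n - k)"
    using xor_pattern_graph_iso[OF reg] assms(1,4) by auto
  then obtain \<sigma> where \<sigma>: "bij_betw \<sigma> {..<2*n} {..<2*n}" "match_weight blue (2*n) \<sigma> = 2*n - k"
    using match_weight_attains[OF reg reg', of "2*n - k"] by auto
  moreover have "match_weight (\<lambda>i j. \<not> blue i j) (2*n) \<sigma> = k"
    using \<sigma>(2) assms(1) by (simp add: match_weight_compl)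
  ultimately show ?thesis by (auto simp: match_weight_def)
qed

end
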